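(* Let $d\ge3$ and let $C$ be a $d$-dimensional Archimedean copula with Williamson measure $\gamma$. Then $C$ is strict if and only if $0$ lies in the support of $\gamma$, i.e. if and only if $\gamma([0,r))>0$ for every $r>0$.
   Context: An Archimedean generator is a continuous non-increasing $\psi:[0,\infty)\to[0,1]$ with $\psi(0)=1$, $\lim_{z\to\infty}\psi(z)=0$, strictly decreasing on $[0,\inf\{z:\psi(z)=0\}]$, normalized by $\psi(1)=1/2$; pseudo-inverse $\varphi(y)=\inf\{z\in[0,\infty]:\psi(z)=y\}$. $C(\mathbf{u})=\psi(\sum_{i=1}^d\varphi(u_i))$ is a $d$-dimensional Archimedean copula iff $(-1)^{d-2}\psi^{(d-2)}$ exists on $(0,\infty)$ and is non-negative, non-increasing and convex. $C$ (and $\psi$) is strict if $\varphi(0)=\infty$. The Williamson measure of $\psi$ is the unique probability measure $\gamma$ on $\mathcal{B}([0,\infty))$ with $\gamma(\{0\})=0$ and $\psi(z)=\int_{[0,\infty)}(1-tz)_+^{d-1}\,d\gamma(t)$ for all $z>0$. *)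

theory Defs
  imports "HOL-Probability.Probability"
begin

text \<open>Pseudo-inverse phi(y) = inf {z in [0,\<infinity>] : psi z = y}, with psi(\<infinity>) = lim psi = 0
  and inf of the empty set = \<infinity>.\<close>
definition pinv :: "(real \<Rightarrow> real) \<Rightarrow> real \<Rightarrow> ereal" where
  "pinv psi y = Inf ({ereal z | z. 0 \<le> z \<and> psi z = y} \<union> (if y = 0 then {\<infinity>} else {}))"

definition arch_generator :: "(real \<Rightarrow> real) \<Rightarrow> bool" where
  "arch_generator psi \<longleftrightarrow>
     continuous_on {0..} psi \<and>
     (\<forall>z\<ge>0. 0 \<le> psi z \<and> psi z \<le> 1) \<and>
     (\<forall>x y. 0 \<le> x \<and> x \<le> y \<longrightarrow> psi y \<le> psi x) \<and>
     psi 0 = 1 \<and>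
     (psi \<longlongrightarrow> 0) at_top \<and>
     (\<forall>x y. 0 \<le> x \<and> x < y \<and> ereal y \<le> Inf {ereal z | z. 0 \<le> z \<and> psi z = 0}
        \<longrightarrow> psi y < psi x) \<and>
     psi 1 = 1/2"

text \<open>Together with arch_generator this is the condition under which
  C(u) = psi(sum phi(u_i)) is a d-dimensional Archimedean copula.\<close>
definition arch_copula_gen :: "nat \<Rightarrow> (real \<Rightarrow> real) \<Rightarrow> bool" where
  "arch_copula_gen d psi \<longleftrightarrow> arch_generator psi \<and>
     (\<exists>f :: nat \<Rightarrow> real \<Rightarrow> real.
        (\<forall>x>0. f 0 x = psi x) \<and>
        (\<forall>k<d-2. \<forall>x>0. (f k has_real_derivative f (Suc k) x) (at x)) \<and>
        (let g = (\<lambda>x. (-1) ^ (d-2) * f (d-2) x) in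
           (\<forall>x>0. 0 \<le> g x) \<and>
           (\<forall>x y. 0 < x \<and> x \<le> y \<longrightarrow> g y \<le> g x) \<and>
           convex_on {0<..} g))"

definition strict_gen :: "(real \<Rightarrow> real) \<Rightarrow> bool" where
  "strict_gen psi \<longleftrightarrow> pinv psi 0 = \<infinity>"

text \<open>Williamson measure: probability measure on the Borel sets of [0,\<infinity>) (modelled as a
  Borel probability measure on the reals giving no mass to (-\<infinity>,0)), with no atom at 0.\<close>
definition williamson_measure :: "nat \<Rightarrow> (real \<Rightarrow> real) \<Rightarrow> real measure \<Rightarrow> bool" where
  "williamson_measure d psi \<gamma> \<longleftrightarrow>
     prob_space \<gamma> \<and> sets \<gamma> = sets borel \<and>
     emeasure \<gamma> {..<0} = 0 \<and> emeasure \<gamma> {0} = 0 \<and>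
     (\<forall>z>0. psi z = (\<integral>t. (max 0 (1 - t * z)) ^ (d - 1) \<partial>\<gamma>))"

end

theory Submission
  imports Defs
begin

text \<open>A generator is strict iff it never vanishes. By the Williamson representation,
  \<open>psi z\<close> is the integral of \<open>(1 - t z)\<^sub>+\<^bsup>d-1\<^esup>\<close>, a kernel that is positive exactly
  on \<open>t < 1/z\<close>; since \<open>\<gamma>\<close> lives on \<open>[0,\<infinity>)\<close>, \<open>psi z = 0\<close> iff \<open>\<gamma>([0,1/z)) = 0\<close>.\<close>

lemma strict_gen_iff_pos:
  assumes "psi 0 = 1"
  shows "strict_gen psi \<longleftrightarrow> (\<forall>z>0. psi z \<noteq> 0)"
proof -
  have "strict_gen psi \<longleftrightarrow> Inf {ereal z | z. 0 \<le> z \<and> psi z = 0} = \<infinity>"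
    unfolding strict_gen_def pinv_def by (simp add: Inf_union_distrib)
  also have "\<dots> \<longleftrightarrow> (\<forall>x\<in>{ereal z | z. 0 \<le> z \<and> psi z = 0}. x = \<infinity>)"
    unfolding top_ereal_def[symmetric] by (rule Inf_top_conv(1))
  also have "\<dots> \<longleftrightarrow> (\<forall>z\<ge>0. psi z \<noteq> 0)"
    by auto
  also have "\<dots> \<longleftrightarrow> (\<forall>z>0. psi z \<noteq> 0)"
    using assms by (auto simp: le_less)
  finally show ?thesis .
qed

lemma williamson_kernel_eq_0_iff:
  fixes t z :: real
  assumes "z > 0" and "n \<noteq> 0"
  shows "(max 0 (1 - t * z)) ^ n = 0 \<longleftrightarrow> 1 / z \<le> t"
  using assms by (simp add: pos_divide_le_eq max_def)

lemma integral_williamson_kernel_eq_0_iff: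
  fixes M :: "real measure" and z :: real
  assumes "finite_measure M" and sets_M: "sets M = sets borel"
    and nonneg: "emeasure M {..<0} = 0" and "z > 0" and "n \<noteq> 0"
  shows "(\<integral>t. (max 0 (1 - t * z)) ^ n \<partial>M) = 0 \<longleftrightarrow> measure M {0..<1/z} = 0"
proof -
  interpret finite_measure M by fact
  let ?f = "\<lambda>t. (max 0 (1 - t * z)) ^ n"
  have [measurable]: "A \<in> sets borel \<Longrightarrow> A \<in> sets M" for A
    using sets_M by simp
  have AE_nonneg: "AE t in M. 0 \<le> t"
    by (rule AE_I[of _ _ "{..<0}"]) (use nonneg in auto)
  have "AE t in M. norm (?f t) \<le> 1"
    using AE_nonneg by eventually_elim (use \<open>z > 0\<close> in \<open>simp add: power_le_one\<close>)
  moreover have "?f \<in> borel_measurable M"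
    by (subst measurable_cong_sets[OF sets_M refl]) measurable
  ultimately have "integrable M ?f"
    by (rule integrable_const_bound)
  then have "(\<integral>t. ?f t \<partial>M) = 0 \<longleftrightarrow> (AE t in M. ?f t = 0)"
    by (simp add: integral_nonneg_eq_0_iff_AE)
  also have "\<dots> \<longleftrightarrow> (AE t in M. t \<notin> {0..<1/z})"
    using AE_nonneg
  proof (rule eventually_cong)
    fix t :: real
    assume "0 \<le> t"
    then show "?f t = 0 \<longleftrightarrow> t \<notin> {0..<1/z}"
      by (subst williamson_kernel_eq_0_iff[OF \<open>z > 0\<close> \<open>n \<noteq> 0\<close>]) auto
  qed
  also have "\<dots> \<longleftrightarrow> emeasure M {0..<1/z} = 0"
    by (rule AE_iff_measurable) (auto simp: sets_eq_imp_space_eq[OF sets_M])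
  also have "\<dots> \<longleftrightarrow> measure M {0..<1/z} = 0"
    by (simp add: emeasure_eq_measure)
  finally show ?thesis .
qed

theorem lemma5p4:
  fixes d :: nat and psi :: "real \<Rightarrow> real" and \<gamma> :: "real measure"
  assumes "d \<ge> 3"
    and "arch_copula_gen d psi"
    and "williamson_measure d psi \<gamma>"
  shows "strict_gen psi \<longleftrightarrow> (\<forall>r>0. measure \<gamma> {0..<r} > 0)"
proof -
  have "psi 0 = 1"
    using assms(2) unfolding arch_copula_gen_def arch_generator_def by simp
  have "prob_space \<gamma>" and sets_\<gamma>: "sets \<gamma> = sets borel" and "emeasure \<gamma> {..<0} = 0"
    and psi_eq: "\<And>z. z > 0 \<Longrightarrow> psi z = (\<integral>t. (max 0 (1 - t * z)) ^ (d - 1) \<partial>\<gamma>)"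
    using assms(3) unfolding williamson_measure_def by auto
  have "strict_gen psi \<longleftrightarrow> (\<forall>z>0. psi z \<noteq> 0)"
    using \<open>psi 0 = 1\<close> by (rule strict_gen_iff_pos)
  also have "\<dots> \<longleftrightarrow> (\<forall>z>0. measure \<gamma> {0..<1/z} \<noteq> 0)"
    using psi_eq integral_williamson_kernel_eq_0_iff[OF prob_space.finite_measure sets_\<gamma>]
      \<open>prob_space \<gamma>\<close> \<open>emeasure \<gamma> {..<0} = 0\<close> \<open>d \<ge> 3\<close> by simp
  also have "\<dots> \<longleftrightarrow> (\<forall>r>0. measure \<gamma> {0..<r} \<noteq> 0)"
    by (metis zero_less_divide_1_iff inverse_eq_divide inverse_inverse_eq)
  also have "\<dots> \<longleftrightarrow> (\<forall>r>0. measure \<gamma> {0..<r} > 0)"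
    by (simp add: less_le)
  finally show ?thesis .
qed

end
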